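(* Let $n\ge 2$ be even. Consider the generalized $n$-gene repressilator system $$\dot r_i = a_i(p_{i-1}) - d_{r_i}(r_i),\qquad \dot p_i = k_i(r_i) - d_{p_i}(p_i),\qquad i=1,\dots,n,$$ (indices mod $n$), with functions satisfying the standing assumptions in the context. Assume: (i) $\lim_{x\to\infty} a_i(x)=0$ for all $i$; (ii) for all $i$, $\delta_i^R > a_i(0)$ and $\delta_i^P > k_i(d_{r_i}^{-1}(a_i(0)))$, where $\delta_i^R:=\lim_{x\to\infty} d_{r_i}(x)$ and $\delta_i^P:=\lim_{x\to\infty} d_{p_i}(x)$ (possibly $+\infty$); (iii) $d_{p_i}'(0)\neq 0$ and $d_{r_i}'(0)\neq 0$ for all $i$. Then the central steady state $E_C$ exists and is a steady state of the system: that is, for each $i$ the fixed-point equation $p_i = f_i\circ f_{i-1}\circ\cdots\circ f_1\circ f_n\circ\cdots\circ f_{i+1}(p_i)$ has a positive solution, and there are such solutions $p_1^*,\dots,p_n^*>0$ for which $$E_C=\big(d_{r_1}^{-1}(a_1(p_n^* )),\,d_{r_2}^{-1}(a_2(p_1^* )),\dots,d_{r_n}^{-1}(a_n(p_{n-1}^* )),\,p_1^*,\dots,p_n^*\big)$$ is a steady state.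
   Context: Standing assumptions: each $a_i:[0,\infty)\to\mathbb{R}$ is $C^1$, nonnegative, strictly decreasing, with $a_i(0)>0$. Each $d_{r_i}, d_{p_i}, k_i:[0,\infty)\to\mathbb{R}$ is $C^1$, vanishes at $0$, and is strictly increasing on $(0,\infty)$. Define $f_i := d_{p_i}^{-1}\circ k_i\circ d_{r_i}^{-1}\circ a_i$ (well defined under assumption (ii)). *)

theory Defs
  imports "HOL-Analysis.Analysis"
begin

text \<open>Genes are indexed 0,...,n-1 (paper: 1,...,n); indices taken mod n.\<close>

definition C1_nonneg :: "(real \<Rightarrow> real) \<Rightarrow> bool" where
  "C1_nonneg g \<longleftrightarrow> (\<exists>g'. continuous_on {0..} g' \<and>
      (\<forall>x\<ge>0. (g has_real_derivative g' x) (at x within {0..})))"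

definition decay_type :: "(real \<Rightarrow> real) \<Rightarrow> bool" where
  "decay_type g \<longleftrightarrow> C1_nonneg g \<and> g 0 = 0 \<and> strict_mono_on {0<..} g"

definition repressor_type :: "(real \<Rightarrow> real) \<Rightarrow> bool" where
  "repressor_type g \<longleftrightarrow> C1_nonneg g \<and> (\<forall>x\<ge>0. g x \<ge> 0)
      \<and> (\<forall>x y. 0 \<le> x \<longrightarrow> x < y \<longrightarrow> g y < g x) \<and> g 0 > 0"

definition inv0 :: "(real \<Rightarrow> real) \<Rightarrow> real \<Rightarrow> real" where
  "inv0 g = inv_into {0..} g"

definition fmap :: "(nat \<Rightarrow> real \<Rightarrow> real) \<Rightarrow> (nat \<Rightarrow> real \<Rightarrow> real) \<Rightarrow>
    (nat \<Rightarrow> real \<Rightarrow> real) \<Rightarrow> (nat \<Rightarrow> real \<Rightarrow> real) \<Rightarrow> nat \<Rightarrow> real \<Rightarrow> real" where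
  "fmap a dr k dp i = inv0 (dp i) \<circ> k i \<circ> inv0 (dr i) \<circ> a i"

text \<open>cyc_chain n f i m = f_{i+m} o ... o f_{i+2} o f_{i+1} (indices mod n);
  with m = n this is f_i o f_{i-1} o ... o f_{i+1}.\<close>
fun cyc_chain :: "nat \<Rightarrow> (nat \<Rightarrow> real \<Rightarrow> real) \<Rightarrow> nat \<Rightarrow> nat \<Rightarrow> real \<Rightarrow> real" where
  "cyc_chain n f i 0 = id"
| "cyc_chain n f i (Suc m) = f ((i + Suc m) mod n) \<circ> cyc_chain n f i m"

definition rep_rhs_r :: "nat \<Rightarrow> (nat \<Rightarrow> real \<Rightarrow> real) \<Rightarrow> (nat \<Rightarrow> real \<Rightarrow> real) \<Rightarrow>
    (nat \<Rightarrow> real) \<Rightarrow> (nat \<Rightarrow> real) \<Rightarrow> nat \<Rightarrow> real" where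
  "rep_rhs_r n a dr r p i = a i (p ((i + n - 1) mod n)) - dr i (r i)"

definition rep_rhs_p :: "(nat \<Rightarrow> real \<Rightarrow> real) \<Rightarrow> (nat \<Rightarrow> real \<Rightarrow> real) \<Rightarrow>
    (nat \<Rightarrow> real) \<Rightarrow> (nat \<Rightarrow> real) \<Rightarrow> nat \<Rightarrow> real" where
  "rep_rhs_p k dp r p i = k i (r i) - dp i (p i)"

definition steady_state where
  "steady_state n a dr k dp r p \<longleftrightarrow>
     (\<forall>i<n. rep_rhs_r n a dr r p i = 0 \<and> rep_rhs_p k dp r p i = 0)"

end

theory Submission
  imports Defs
begin

text \<open>Each gene contributes the map \<open>f\<^sub>i\<close>, which sends \<open>[0,\<infinity>)\<close> into \<open>(0, f\<^sub>i 0]\<close> and is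
  antitone: \<open>a\<^sub>i\<close> is decreasing, while \<open>k\<^sub>i\<close> and the inverses of \<open>d\<^sub>r\<^sub>i\<close>, \<open>d\<^sub>p\<^sub>i\<close> are increasing,
  and the saturation conditions (ii) guarantee that these inverses are defined on all values that
  occur. For even \<open>n\<close> the cyclic composite of the \<open>f\<^sub>i\<close> is therefore monotone and maps
  \<open>[0,\<infinity>)\<close> into a bounded interval, so it has a fixed point: the supremum of its post-fixed
  points. Propagating this fixed point around the cycle gives positive \<open>p\<^sub>i\<close> with
  \<open>p\<^sub>i = f\<^sub>i(p\<^sub>i\<^sub>-\<^sub>1)\<close>, which is exactly the steady-state condition.\<close>

lemma C1_nonneg_continuous_on:
  assumes "C1_nonneg g"
  shows "continuous_on {0..} g"
proof -
  from assms obtain g' where "\<forall>x\<ge>0. (g has_real_derivative g' x) (at x within {0..})"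
    unfolding C1_nonneg_def by blast
  then show ?thesis
    unfolding continuous_on_eq_continuous_within by (auto intro: DERIV_continuous)
qed

lemma decay_type_continuous_on:
  assumes "decay_type g"
  shows "continuous_on {0..} g"
  using assms C1_nonneg_continuous_on unfolding decay_type_def by blast

lemma decay_type_strict_mono_on:
  assumes "decay_type g"
  shows "strict_mono_on {0..} g"
proof -
  have mono: "strict_mono_on {0<..} g" and g0: "g 0 = 0"
    using assms unfolding decay_type_def by auto
  have pos: "0 < g x" if "0 < x" for x
  proof -
    have "(g \<longlongrightarrow> g 0) (at 0 within {0..})"
      using decay_type_continuous_on[OF assms] unfolding continuous_on_def by simp
    then have "(g \<longlongrightarrow> g 0) (at_right 0)"
      by (rule tendsto_within_subset) auto
    moreover have "eventually (\<lambda>t. g t \<le> g (x/2)) (at_right 0)"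
      using eventually_at_right_real[of 0 "x/2"] \<open>0 < x\<close>
      by (auto elim!: eventually_mono intro!: less_imp_le strict_mono_onD[OF mono])
    ultimately have "g 0 \<le> g (x/2)"
      by (rule tendsto_upperbound) simp
    also have "\<dots> < g x"
      using \<open>0 < x\<close> by (auto intro: strict_mono_onD[OF mono])
    finally show ?thesis
      using g0 by simp
  qed
  show ?thesis
  proof (rule strict_mono_onI)
    fix r s :: real
    assume "r \<in> {0..}" "s \<in> {0..}" "r < s"
    then show "g r < g s"
      using pos g0 strict_mono_onD[OF mono] by (cases "r = 0") auto
  qed
qed

lemma decay_type_image_below_limit:
  assumes "decay_type g" and "((\<lambda>x. ereal (g x)) \<longlongrightarrow> \<delta>) at_top"
    and "0 \<le> y" and "ereal y < \<delta>"
  shows "y \<in> g ` {0..}"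
proof -
  have "eventually (\<lambda>x. ereal y < ereal (g x)) at_top"
    using order_tendstoD(1)[OF assms(2,4)] .
  then obtain N where "\<forall>x\<ge>N. y < g x"
    unfolding eventually_at_top_linorder by auto
  then have "y \<le> g (max N 0)"
    by (simp add: less_imp_le)
  moreover have "continuous_on {0..max N 0} g"
    using decay_type_continuous_on[OF assms(1)] by (rule continuous_on_subset) auto
  moreover have "g 0 \<le> y"
    using assms(1,3) unfolding decay_type_def by simp
  ultimately obtain x where "0 \<le> x" "g x = y"
    using IVT'[of g 0 y "max N 0"] by auto
  then show ?thesis
    by auto
qed

lemma inv0_mono_on:
  assumes "strict_mono_on {0..} g"
  shows "mono_on (g ` {0..}) (inv0 g)"
proof (rule mono_onI)
  fix y z
  assume "y \<in> g ` {0..}" "z \<in> g ` {0..}" "y \<le> z"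
  then show "inv0 g y \<le> inv0 g z"
    unfolding inv0_def
    by (metis assms f_inv_into_f inv_into_into strict_mono_on_less_eq)
qed

text \<open>The hypothesis \<open>h 0 < \<delta>\<close> is the saturation condition (ii): it makes \<open>g u = h x\<close>
  solvable in \<open>u\<close> for every \<open>x \<ge> 0\<close>.\<close>

lemma decay_type_inv0_comp:
  fixes h :: "real \<Rightarrow> real"
  assumes g: "decay_type g" and lim: "((\<lambda>x. ereal (g x)) \<longlongrightarrow> \<delta>) at_top" "ereal (h 0) < \<delta>"
    and h: "antimono_on {0..} h" "\<And>x. 0 \<le> x \<Longrightarrow> 0 < h x"
  shows "antimono_on {0..} (inv0 g \<circ> h)"
    and "0 \<le> x \<Longrightarrow> 0 < inv0 g (h x)"
    and "0 \<le> x \<Longrightarrow> g (inv0 g (h x)) = h x"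
proof -
  have image: "h x \<in> g ` {0..}" if "0 \<le> x" for x
  proof (rule decay_type_image_below_limit[OF g lim(1)])
    have "h x \<le> h 0"
      using monotone_onD[OF h(1), of 0 x] that by simp
    then show "ereal (h x) < \<delta>"
      using lim(2) by (metis ereal_less_eq(3) order.strict_trans1)
  qed (use h(2) that in \<open>simp add: less_imp_le\<close>)
  show "antimono_on {0..} (inv0 g \<circ> h)"
    using image mono_onD[OF inv0_mono_on[OF decay_type_strict_mono_on[OF g]]]
      monotone_onD[OF h(1)]
    by (intro monotone_onI) simp
  show inverse: "g (inv0 g (h x)) = h x" if "0 \<le> x"
    using image[OF that] unfolding inv0_def by (rule f_inv_into_f)
  show "0 < inv0 g (h x)" if "0 \<le> x"
  proof -
    have "0 \<le> inv0 g (h x)"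
      using image[OF that] unfolding inv0_def by (metis atLeast_iff inv_into_into)
    moreover have "inv0 g (h x) \<noteq> 0"
      using inverse[OF that] h(2)[OF that] g unfolding decay_type_def by auto
    ultimately show ?thesis
      by simp
  qed
qed

lemma repressor_type_antimono_on:
  assumes "repressor_type a"
  shows "antimono_on {0..} a"
  using assms unfolding repressor_type_def
  by (intro monotone_onI) (auto simp: order_le_less)

lemma repressor_type_pos:
  assumes "repressor_type a" and "0 \<le> x"
  shows "0 < a x"
proof -
  have "a (x + 1) < a x" and "0 \<le> a (x + 1)"
    using assms unfolding repressor_type_def by auto
  then show ?thesis
    by simp
qed

locale repressilator_gene =
  fixes a dr k dp :: "real \<Rightarrow> real"
  assumes repressor: "repressor_type a"
    and decay: "decay_type dr" "decay_type k" "decay_type dp"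
    and mRNA_saturation:
      "\<exists>\<delta>R::ereal. ((\<lambda>x. ereal (dr x)) \<longlongrightarrow> \<delta>R) at_top \<and> \<delta>R > ereal (a 0)"
    and protein_saturation:
      "\<exists>\<delta>P::ereal. ((\<lambda>x. ereal (dp x)) \<longlongrightarrow> \<delta>P) at_top \<and> \<delta>P > ereal (k (inv0 dr (a 0)))"
begin

lemma mRNA_map_antimono_on: "antimono_on {0..} (inv0 dr \<circ> a)"
  and mRNA_map_pos: "0 \<le> x \<Longrightarrow> 0 < inv0 dr (a x)"
  and mRNA_steady_state: "0 \<le> x \<Longrightarrow> dr (inv0 dr (a x)) = a x"
  using mRNA_saturation decay_type_inv0_comp[OF decay(1) _ _ repressor_type_antimono_on[OF repressor]]
    repressor_type_pos[OF repressor]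
  by blast+

lemma protein_map_antimono_on: "antimono_on {0..} (inv0 dp \<circ> k \<circ> inv0 dr \<circ> a)"
  and protein_map_pos: "0 \<le> x \<Longrightarrow> 0 < (inv0 dp \<circ> k \<circ> inv0 dr \<circ> a) x"
  and protein_steady_state: "0 \<le> x \<Longrightarrow> dp ((inv0 dp \<circ> k \<circ> inv0 dr \<circ> a) x) = k (inv0 dr (a x))"
proof -
  have "antimono_on {0..} (k \<circ> (inv0 dr \<circ> a))"
  proof (rule monotone_onI)
    fix x y :: real
    assume "x \<in> {0..}" "y \<in> {0..}" "x \<le> y"
    then have "inv0 dr (a y) \<le> inv0 dr (a x)" and "0 < inv0 dr (a y)"
      using monotone_onD[OF mRNA_map_antimono_on] mRNA_map_pos by auto
    then show "(k \<circ> (inv0 dr \<circ> a)) y \<le> (k \<circ> (inv0 dr \<circ> a)) x"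
      using strict_mono_on_leD[OF decay_type_strict_mono_on[OF decay(2)]] by simp
  qed
  moreover have "0 < k (inv0 dr (a x))" if "0 \<le> x" for x
    using strict_mono_onD[OF decay_type_strict_mono_on[OF decay(2)], of 0] mRNA_map_pos[OF that] decay(2)
    unfolding decay_type_def by simp
  ultimately show "antimono_on {0..} (inv0 dp \<circ> k \<circ> inv0 dr \<circ> a)"
    and "0 \<le> x \<Longrightarrow> 0 < (inv0 dp \<circ> k \<circ> inv0 dr \<circ> a) x"
    and "0 \<le> x \<Longrightarrow> dp ((inv0 dp \<circ> k \<circ> inv0 dr \<circ> a) x) = k (inv0 dr (a x))"
    using protein_saturation decay_type_inv0_comp[OF decay(3), of _ "k \<circ> (inv0 dr \<circ> a)"]
    by (auto simp: comp_assoc)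
qed

end

lemma mono_on_bounded_fixpoint:
  fixes G :: "'a::conditionally_complete_linorder \<Rightarrow> 'a"
  assumes mono: "mono_on {l..} G" and bounded: "G ` {l..} \<subseteq> {l..u}"
  shows "\<exists>x\<ge>l. G x = x"
proof -
  define S where "S = {x \<in> {l..u}. x \<le> G x}"
  have "l \<in> S"
    using bounded by (force simp: S_def)
  have "bdd_above S"
    by (auto simp: S_def)
  define s where "s = Sup S"
  have "l \<le> s"
    unfolding s_def using \<open>l \<in> S\<close> \<open>bdd_above S\<close> by (rule cSup_upper)
  have "x \<le> G s" if "x \<in> S" for x
  proof -
    have "x \<le> s"
      unfolding s_def using that \<open>bdd_above S\<close> by (rule cSup_upper)
    then show ?thesis
      using that \<open>l \<le> s\<close> mono_onD[OF mono] by (force simp: S_def)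
  qed
  then have "s \<le> G s"
    unfolding s_def using \<open>l \<in> S\<close> by (blast intro: cSup_least)
  then have "G s \<in> S"
    using bounded \<open>l \<le> s\<close> mono_onD[OF mono] by (force simp: S_def)
  then have "G s \<le> s"
    unfolding s_def using \<open>bdd_above S\<close> by (rule cSup_upper)
  then show ?thesis
    using \<open>s \<le> G s\<close> \<open>l \<le> s\<close> by (blast intro: order_antisym)
qed

definition cyclic_solution :: "nat \<Rightarrow> (nat \<Rightarrow> real \<Rightarrow> real) \<Rightarrow> (nat \<Rightarrow> real) \<Rightarrow> bool" where
  "cyclic_solution n f p \<longleftrightarrow> (\<forall>j<n. p j = f j (p ((j + n - 1) mod n)))"

lemma cyc_chain_Suc_apply:
  "cyc_chain n f i (Suc m) x = f ((i + Suc m) mod n) (cyc_chain n f i m x)"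
  by simp

lemma cyc_chain_nonneg:
  assumes "0 < n" and "\<And>i x. i < n \<Longrightarrow> 0 \<le> x \<Longrightarrow> 0 \<le> f i x" and "0 \<le> x"
  shows "0 \<le> cyc_chain n f i m x"
proof (induction m)
  case (Suc m)
  then show ?case
    using assms(1,2) by (simp only: cyc_chain_Suc_apply) simp
qed (simp add: assms)

lemma cyc_chain_mono_on_even:
  assumes "0 < n" and nonneg: "\<And>i x. i < n \<Longrightarrow> 0 \<le> x \<Longrightarrow> 0 \<le> f i x"
    and antimono: "\<And>i. i < n \<Longrightarrow> antimono_on {0..} (f i)" and "even m"
  shows "mono_on {0..} (cyc_chain n f i m)"
proof -
  obtain l where "m = 2 * l"
    using \<open>even m\<close> by blast
  have "mono_on {0..} (cyc_chain n f i (2 * l))"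
  proof (induction l)
    case 0
    show ?case
      by (simp add: monotone_on_def)
  next
    case (Suc l)
    let ?c = "cyc_chain n f i (2 * l)"
    define j1 j2 where "j1 = (i + Suc (2 * l)) mod n" and "j2 = (i + Suc (Suc (2 * l))) mod n"
    have j: "j1 < n" "j2 < n"
      using \<open>0 < n\<close> by (simp_all add: j1_def j2_def)
    have chain: "cyc_chain n f i (2 * Suc l) x = f j2 (f j1 (?c x))" for x
      unfolding j1_def j2_def by (simp only: mult_Suc_right add_2_eq_Suc cyc_chain_Suc_apply)
    show ?case
    proof (rule mono_onI)
      fix r s :: real
      assume "r \<in> {0..}" "s \<in> {0..}" "r \<le> s"
      then have "0 \<le> ?c r" "0 \<le> ?c s" "?c r \<le> ?c s"
        using cyc_chain_nonneg[OF \<open>0 < n\<close> nonneg] mono_onD[OF Suc.IH] by auto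
      then have "0 \<le> f j1 (?c s)" "0 \<le> f j1 (?c r)" "f j1 (?c s) \<le> f j1 (?c r)"
        using nonneg[OF j(1)] monotone_onD[OF antimono[OF j(1)]] by auto
      then show "cyc_chain n f i (2 * Suc l) r \<le> cyc_chain n f i (2 * Suc l) s"
        unfolding chain using monotone_onD[OF antimono[OF j(2)]] by auto
    qed
  qed
  then show ?thesis
    using \<open>m = 2 * l\<close> by simp
qed

lemma cyclic_solution_exists:
  assumes "even n" "0 < n" and pos: "\<And>i x. i < n \<Longrightarrow> 0 \<le> x \<Longrightarrow> 0 < f i x"
    and antimono: "\<And>i. i < n \<Longrightarrow> antimono_on {0..} (f i)"
  shows "\<exists>p. cyclic_solution n f p \<and> (\<forall>j<n. 0 < p j)"
proof -
  have nonneg: "\<And>i x. i < n \<Longrightarrow> 0 \<le> x \<Longrightarrow> 0 \<le> f i x"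
    using pos less_imp_le by blast
  let ?c = "cyc_chain n f (n - 1)"
  have index: "(n - 1 + Suc j) mod n = j" if "j < n" for j
    using \<open>0 < n\<close> that by (simp add: mod_if)
  have step: "?c (Suc j) x = f j (?c j x)" if "j < n" for j x
    using cyc_chain_Suc_apply[of n f "n - 1" j x] index[OF that] by simp
  have mono: "mono_on {0..} (?c n)"
    using \<open>0 < n\<close> nonneg antimono \<open>even n\<close> by (rule cyc_chain_mono_on_even)
  have bounded: "?c n ` {0..} \<subseteq> {0..f (n - 1) 0}"
  proof (rule image_subsetI)
    fix x :: real
    assume "x \<in> {0..}"
    then have "0 \<le> ?c (n - 1) x"
      using cyc_chain_nonneg[OF \<open>0 < n\<close> nonneg] by simp
    moreover have "?c n x = f (n - 1) (?c (n - 1) x)"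
      using step[of "n - 1" x] \<open>0 < n\<close> by simp
    ultimately show "?c n x \<in> {0..f (n - 1) 0}"
      using nonneg monotone_onD[OF antimono] \<open>0 < n\<close> by simp
  qed
  obtain x where "0 \<le> x" "?c n x = x"
    using mono_on_bounded_fixpoint[OF mono bounded] by blast
  define p where "p j = ?c (Suc j) x" for j
  have prev: "?c j x = p ((j + n - 1) mod n)" if "j < n" for j
  proof (cases j)
    case 0
    then show ?thesis
      using \<open>?c n x = x\<close> \<open>0 < n\<close> by (simp add: p_def)
  next
    case (Suc j')
    then show ?thesis
      using that by (simp add: p_def)
  qed
  have "p j = f j (p ((j + n - 1) mod n))" if "j < n" for j
    unfolding p_def[of j] step[OF that] prev[OF that] ..
  then have "cyclic_solution n f p"
    unfolding cyclic_solution_def by blast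
  moreover have "0 < p j" if "j < n" for j
    unfolding p_def step[OF that]
    using pos[OF that] cyc_chain_nonneg[OF \<open>0 < n\<close> nonneg \<open>0 \<le> x\<close>] by simp
  ultimately show ?thesis
    by blast
qed

lemma cyclic_solution_cyc_chain:
  assumes "cyclic_solution n f p" and "i < n"
  shows "cyc_chain n f i m (p i) = p ((i + m) mod n)"
proof (induction m)
  case 0
  show ?case
    using \<open>i < n\<close> by simp
next
  case (Suc m)
  define j where "j = (i + Suc m) mod n"
  have "j < n"
    using \<open>i < n\<close> by (simp add: j_def)
  have "(j + n - 1) mod n = (j + (n - 1)) mod n"
    using \<open>i < n\<close> by simp
  also have "\<dots> = (i + Suc m + (n - 1)) mod n"
    unfolding j_def by (rule mod_add_left_eq)
  also have "\<dots> = (i + m) mod n"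
    using \<open>i < n\<close> by simp
  finally have "(j + n - 1) mod n = (i + m) mod n" .
  then have "p j = f j (p ((i + m) mod n))"
    using assms(1) \<open>j < n\<close> unfolding cyclic_solution_def by metis
  then show ?case
    using Suc.IH unfolding cyc_chain_Suc_apply j_def[symmetric] by simp
qed

lemma steady_state_of_cyclic_solution:
  assumes gene: "\<And>i. i < n \<Longrightarrow> repressilator_gene (a i) (dr i) (k i) (dp i)"
    and solution: "cyclic_solution n (fmap a dr k dp) p" and pos: "\<forall>j<n. 0 < p j"
  shows "steady_state n a dr k dp (\<lambda>i. inv0 (dr i) (a i (p ((i + n - 1) mod n)))) p"
  unfolding steady_state_def rep_rhs_r_def rep_rhs_p_def
proof (intro allI impI conjI)
  fix i
  assume "i < n"
  let ?q = "p ((i + n - 1) mod n)"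
  have "0 \<le> ?q"
    using pos \<open>i < n\<close> by (simp add: less_imp_le)
  show "a i ?q - dr i (inv0 (dr i) (a i ?q)) = 0"
    using repressilator_gene.mRNA_steady_state[OF gene[OF \<open>i < n\<close>] \<open>0 \<le> ?q\<close>] by simp
  have "p i = fmap a dr k dp i ?q"
    using solution \<open>i < n\<close> unfolding cyclic_solution_def by blast
  then show "k i (inv0 (dr i) (a i ?q)) - dp i (p i) = 0"
    using repressilator_gene.protein_steady_state[OF gene[OF \<open>i < n\<close>] \<open>0 \<le> ?q\<close>]
    by (simp add: fmap_def)
qed

theorem proposition2:
  fixes n :: nat and a dr dp k :: "nat \<Rightarrow> real \<Rightarrow> real"
  assumes "even n" and "n \<ge> 2"
    and "\<forall>i<n. repressor_type (a i)"
    and "\<forall>i<n. decay_type (dr i) \<and> decay_type (dp i) \<and> decay_type (k i)"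
    and "\<forall>i<n. (a i \<longlongrightarrow> 0) at_top"
    and "\<forall>i<n. \<exists>\<delta>R::ereal. ((\<lambda>x. ereal (dr i x)) \<longlongrightarrow> \<delta>R) at_top \<and> \<delta>R > ereal (a i 0)"
    and "\<forall>i<n. \<exists>\<delta>P::ereal. ((\<lambda>x. ereal (dp i x)) \<longlongrightarrow> \<delta>P) at_top
                  \<and> \<delta>P > ereal (k i (inv0 (dr i) (a i 0)))"
    and "\<forall>i<n. \<forall>D. (dp i has_real_derivative D) (at 0 within {0..}) \<longrightarrow> D \<noteq> 0"
    and "\<forall>i<n. \<forall>D. (dr i has_real_derivative D) (at 0 within {0..}) \<longrightarrow> D \<noteq> 0"
  shows "\<exists>p :: nat \<Rightarrow> real.
           (\<forall>i<n. p i > 0 \<and> p i = cyc_chain n (fmap a dr k dp) i n (p i))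
         \<and> steady_state n a dr k dp
             (\<lambda>i. inv0 (dr i) (a i (p ((i + n - 1) mod n)))) p"
proof -
  let ?f = "fmap a dr k dp"
  have gene: "repressilator_gene (a i) (dr i) (k i) (dp i)" if "i < n" for i
    using assms(3,4,6,7) that by (simp add: repressilator_gene_def)
  have "\<exists>p. cyclic_solution n ?f p \<and> (\<forall>j<n. 0 < p j)"
  proof (rule cyclic_solution_exists)
    show "even n" "0 < n"
      using assms(1,2) by simp_all
    show "0 < ?f i x" if "i < n" "0 \<le> x" for i x
      using repressilator_gene.protein_map_pos[OF gene[OF that(1)] that(2)] by (simp add: fmap_def)
    show "antimono_on {0..} (?f i)" if "i < n" for i
      using repressilator_gene.protein_map_antimono_on[OF gene[OF that]] by (simp add: fmap_def)
  qed
  then obtain p where solution: "cyclic_solution n ?f p" and pos: "\<forall>j<n. 0 < p j"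
    by blast
  have "p i = cyc_chain n ?f i n (p i)" if "i < n" for i
    using cyclic_solution_cyc_chain[OF solution that, of n] that by simp
  then show ?thesis
    using pos steady_state_of_cyclic_solution[OF gene solution pos] by blast
qed

end
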